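(* Let $n,p>1$ and $q\geq 1$ be integers. A magic column rectangle $MCR(n^{(p)};q)$ exists if and only if $n$ is even or all three of $n,p,q$ are odd.
   Context: A magic column rectangle $MCR(n^{(p)};q)$ is an $np\times q$ matrix whose entries are $1,2,\ldots,npq$, each appearing exactly once, which is partitioned into $pq$ blocks of size $n\times 1$ (each column is split into $p$ consecutive segments of $n$ entries) such that the sum of the entries in every block is the same constant (necessarily $\frac{n(npq+1)}{2}$). *)

theory Defs
  imports Main
begin

definition is_MCR :: "nat \<Rightarrow> nat \<Rightarrow> nat \<Rightarrow> (nat \<Rightarrow> nat \<Rightarrow> nat) \<Rightarrow> bool" where
  "is_MCR n p q M \<longleftrightarrow>
     bij_betw (\<lambda>(i, j). M i j) ({..<n * p} \<times> {..<q}) {1..n * p * q} \<and>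
     (\<exists>c. \<forall>k<p. \<forall>j<q. (\<Sum>i\<in>{k * n..<k * n + n}. M i j) = c)"

definition MCR_exists :: "nat \<Rightarrow> nat \<Rightarrow> nat \<Rightarrow> bool" where
  "MCR_exists n p q \<longleftrightarrow> (\<exists>M. is_MCR n p q M)"

end

theory Submission
  imports Defs
begin

text \<open>An odd n forces p and q to be odd, because every block of an MCR must sum to
  n(npq+1)/2. For the converse, read the pq blocks as the rows of a pq \<times> n array filled
  with 1, ..., npq whose row sums agree. Pairing b+1 with 2m-b gives such an array with two
  columns for every number m of rows, a rotation trick gives one with three columns for odd m,
  and appending a two-column array shifted by mn to an n-column one yields n+2 columns.\<close>

lemma bij_betw_columns:
  fixes V :: "nat \<Rightarrow> nat \<Rightarrow> nat"
  assumes inj: "\<And>r. r < n \<Longrightarrow> inj_on (\<lambda>b. V b r) {..<m}"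
    and range: "\<And>b r. b < m \<Longrightarrow> r < n \<Longrightarrow> V b r \<in> {r * m + 1..r * m + m}"
  shows "bij_betw (\<lambda>(b, r). V b r) ({..<m} \<times> {..<n}) {1..m * n}"
proof -
  have column: "(V b r - 1) div m = r" if "b < m" "r < n" for b r
    using range[OF that] by (intro div_nat_eqI) (auto simp: algebra_simps)
  have "inj_on (\<lambda>(b, r). V b r) ({..<m} \<times> {..<n})"
  proof (rule inj_onI, clarify)
    fix b r b' r'
    assume b: "b < m" "b' < m" and r: "r < n" "r' < n" and eq: "V b r = V b' r'"
    have "r = r'" using column[OF b(1) r(1)] column[OF b(2) r(2)] eq by simp
    with inj[OF r(1)] b eq show "b = b' \<and> r = r'" by (auto dest: inj_onD)
  qed
  moreover have "(\<lambda>(b, r). V b r) ` ({..<m} \<times> {..<n}) \<subseteq> {1..m * n}"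
  proof clarify
    fix b r assume "b < m" "r < n"
    moreover from \<open>r < n\<close> have "r * m + m \<le> m * n"
      by (metis Suc_leI mult.commute mult_Suc mult_le_mono2 add.commute)
    ultimately show "V b r \<in> {1..m * n}" using range[of b r] by auto
  qed
  moreover have "card ({..<m} \<times> {..<n}) = card {1..m * n}"
    by (simp add: card_cartesian_product)
  ultimately show ?thesis
    by (metis bij_betw_def card_image card_subset_eq finite_atLeastAtMost)
qed

lemma bij_betw_append_columns:
  fixes V W :: "nat \<Rightarrow> nat \<Rightarrow> nat"
  assumes V: "bij_betw (\<lambda>(b, r). V b r) ({..<m} \<times> {..<n}) {1..m * n}"
    and W: "bij_betw (\<lambda>(b, r). W b r) ({..<m} \<times> {..<k}) {1..m * k}"
  shows "bij_betw (\<lambda>(b, r). if r < n then V b r else m * n + W b (r - n))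
           ({..<m} \<times> {..<n + k}) {1..m * (n + k)}"
proof -
  have shift: "bij_betw (\<lambda>(b, r). (b, r - n)) ({..<m} \<times> {n..<n + k}) ({..<m} \<times> {..<k})"
    by (rule bij_betw_byWitness[where f' = "\<lambda>(b, r). (b, r + n)"]) auto
  have add: "bij_betw ((+) (m * n)) {1..m * k} {m * n + 1..m * (n + k)}"
    by (simp add: add_mult_distrib2)
  have right: "bij_betw (\<lambda>(b, r). m * n + W b (r - n)) ({..<m} \<times> {n..<n + k}) {m * n + 1..m * (n + k)}"
    using bij_betw_trans[OF bij_betw_trans[OF shift W] add]
    by (simp add: comp_def case_prod_unfold)
  have glued: "bij_betw
      (\<lambda>x. if x \<in> {..<m} \<times> {..<n} then (\<lambda>(b, r). V b r) x else (\<lambda>(b, r). m * n + W b (r - n)) x)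
      ({..<m} \<times> {..<n} \<union> {..<m} \<times> {n..<n + k}) ({1..m * n} \<union> {m * n + 1..m * (n + k)})"
    by (rule bij_betw_disjoint_Un[OF V right]) auto
  have rows: "{..<m} \<times> {..<n} \<union> {..<m} \<times> {n..<n + k} = {..<m} \<times> {..<n + k}"
    by auto
  have entries: "{1..m * n} \<union> {m * n + 1..m * (n + k)} = {1..m * (n + k)}"
    by (auto simp: algebra_simps)
  show ?thesis using glued unfolding rows entries
    by (rule bij_betw_cong[THEN iffD1, rotated]) (auto split: if_split_asm)
qed

definition row_magic :: "nat \<Rightarrow> nat \<Rightarrow> (nat \<Rightarrow> nat \<Rightarrow> nat) \<Rightarrow> bool" where
  "row_magic m n V \<longleftrightarrow>
     bij_betw (\<lambda>(b, r). V b r) ({..<m} \<times> {..<n}) {1..m * n} \<and>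
     (\<exists>c. \<forall>b<m. (\<Sum>r<n. V b r) = c)"

lemma row_magic_append:
  assumes "row_magic m n V" and "row_magic m k W"
  shows "row_magic m (n + k) (\<lambda>b r. if r < n then V b r else m * n + W b (r - n))"
proof -
  from assms obtain c d where
    V: "bij_betw (\<lambda>(b, r). V b r) ({..<m} \<times> {..<n}) {1..m * n}" "\<forall>b<m. (\<Sum>r<n. V b r) = c" and
    W: "bij_betw (\<lambda>(b, r). W b r) ({..<m} \<times> {..<k}) {1..m * k}" "\<forall>b<m. (\<Sum>r<k. W b r) = d"
    unfolding row_magic_def by blast
  have "(\<Sum>r<n + k. if r < n then V b r else m * n + W b (r - n)) = c + (m * n * k + d)"
    if "b < m" for b
  proof -
    have "(\<Sum>r<n + k. if r < n then V b r else m * n + W b (r - n))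
        = (\<Sum>r<n. V b r) + (\<Sum>r\<in>{n..<n + k}. m * n + W b (r - n))"
      by (simp add: lessThan_atLeast0 sum.atLeastLessThan_concat[of 0 n "n + k", symmetric])
    also have "(\<Sum>r\<in>{n..<n + k}. m * n + W b (r - n)) = (\<Sum>r<k. m * n + W b r)"
      using sum.shift_bounds_nat_ivl[of "\<lambda>r. m * n + W b (r - n)" 0 n k]
      by (simp add: lessThan_atLeast0 add.commute)
    also have "(\<Sum>r<n. V b r) + (\<Sum>r<k. m * n + W b r) = c + (m * n * k + d)"
      using V(2) W(2) \<open>b < m\<close> by (simp add: sum.distrib)
    finally show ?thesis .
  qed
  with bij_betw_append_columns[OF V(1) W(1)] show ?thesis
    unfolding row_magic_def by blast
qed

lemma row_magic_two_columns: "row_magic m 2 (\<lambda>b r. if r = 0 then b + 1 else 2 * m - b)"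
proof -
  have "bij_betw (\<lambda>(b, r::nat). if r = 0 then b + 1 else 2 * m - b) ({..<m} \<times> {..<2}) {1..m * 2}"
    by (rule bij_betw_columns) (auto simp: inj_on_def less_2_cases_iff)
  moreover have "\<forall>b<m. (\<Sum>r<2::nat. if r = 0 then b + 1 else 2 * m - b) = 2 * m + 1"
    by (simp add: numeral_2_eq_2)
  ultimately show ?thesis
    unfolding row_magic_def by blast
qed

text \<open>With m = 2s+1, the middle column is b \<mapsto> m + 1 + (b + s) mod m, and the last
  column is then forced by the row sum 9s+6.\<close>

lemma row_magic_three_columns:
  "row_magic (2 * s + 1) 3 (\<lambda>b r.
     if r = 0 then b + 1
     else if r = 1 then (if b \<le> s then 3 * s + 2 + b else s + 1 + b)
     else if b \<le> s then 6 * s + 3 - 2 * b else 8 * s + 4 - 2 * b)"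
  (is "row_magic _ _ ?V")
proof -
  have parity: "odd (?V b 2) \<longleftrightarrow> b \<le> s" if "b < 2 * s + 1" for b
    using that by presburger
  have last_inj: "b = b'" if "b < 2 * s + 1" "b' < 2 * s + 1" and eq: "?V b 2 = ?V b' 2" for b b'
  proof -
    have "b \<le> s \<longleftrightarrow> b' \<le> s"
      using parity[OF that(1)] parity[OF that(2)] eq by simp
    with that show ?thesis by (auto split: if_splits)
  qed
  have three: "r = 0 \<or> r = 1 \<or> r = 2" if "r < 3" for r :: nat
    using that by auto
  have "inj_on (\<lambda>b. ?V b r) {..<2 * s + 1}" if "r < 3" for r
    using three[OF that] last_inj by (auto simp: inj_on_def)
  moreover have "?V b r \<in> {r * (2 * s + 1) + 1..r * (2 * s + 1) + (2 * s + 1)}"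
    if "b < 2 * s + 1" "r < 3" for b r
    using three[OF that(2)] that(1) by auto
  ultimately have "bij_betw (\<lambda>(b, r). ?V b r) ({..<2 * s + 1} \<times> {..<3}) {1..(2 * s + 1) * 3}"
    by (rule bij_betw_columns)
  moreover have "\<forall>b<2 * s + 1. (\<Sum>r<3. ?V b r) = 9 * s + 6"
    by (auto simp: numeral_3_eq_3)
  ultimately show ?thesis
    unfolding row_magic_def by blast
qed

lemma row_magic_exists:
  assumes "2 \<le> n" and "even n \<or> odd m"
  shows "\<exists>V. row_magic m n V"
  using assms
proof (induction n rule: less_induct)
  case (less n)
  consider "n = 2" | "n = 3" | "4 \<le> n"
    using less.prems(1) by linarith
  then show ?case
  proof cases
    case 1
    then show ?thesis using row_magic_two_columns by blast
  next
    case 2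
    with less.prems(2) obtain s where "m = 2 * s + 1"
      by (auto elim: oddE)
    then show ?thesis using 2 row_magic_three_columns by blast
  next
    case 3
    with less.prems(2) have "\<exists>V. row_magic m (n - 2) V"
      by (intro less.IH) auto
    then obtain V where V: "row_magic m (n - 2) V" ..
    have "n = n - 2 + 2" using 3 by simp
    with row_magic_append[OF V row_magic_two_columns] show ?thesis by metis
  qed
qed

lemma mult_add_less_mult:
  fixes a j p q :: nat
  assumes "a < p" and "j < q"
  shows "a * q + j < p * q"
proof -
  have "a * q + j < Suc a * q" using assms(2) by simp
  also have "\<dots> \<le> p * q" using assms(1) by (intro mult_le_mono1) simp
  finally show ?thesis .
qed

lemma bij_betw_block_index:
  fixes n p q :: nat
  assumes "0 < n" and "0 < q"
  shows "bij_betw (\<lambda>(i, j). (i div n * q + j, i mod n)) ({..<n * p} \<times> {..<q}) ({..<p * q} \<times> {..<n})"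
proof (rule bij_betw_byWitness[where f' = "\<lambda>(b, r). (b div q * n + r, b mod q)"])
  have div_less: "x div d < p" if "x < d * p" for x d :: nat
    using that by (simp add: less_mult_imp_div_less mult.commute)
  show "\<forall>x\<in>{..<n * p} \<times> {..<q}. (\<lambda>(b, r). (b div q * n + r, b mod q)) ((\<lambda>(i, j). (i div n * q + j, i mod n)) x) = x"
    using assms by auto
  show "\<forall>x\<in>{..<p * q} \<times> {..<n}. (\<lambda>(i, j). (i div n * q + j, i mod n)) ((\<lambda>(b, r). (b div q * n + r, b mod q)) x) = x"
    using assms by auto
  show "(\<lambda>(i, j). (i div n * q + j, i mod n)) ` ({..<n * p} \<times> {..<q}) \<subseteq> {..<p * q} \<times> {..<n}"
    using assms by (auto intro!: mult_add_less_mult div_less)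
  show "(\<lambda>(b, r). (b div q * n + r, b mod q)) ` ({..<p * q} \<times> {..<n}) \<subseteq> {..<n * p} \<times> {..<q}"
  proof -
    have "b div q * n + r < n * p" if "b < p * q" "r < n" for b r
      using mult_add_less_mult[OF div_less[of b q] that(2)] that(1)
      by (simp add: mult.commute)
    with assms show ?thesis by auto
  qed
qed

lemma MCR_exists_if_row_magic:
  assumes "0 < n" and "0 < q" and "row_magic (p * q) n V"
  shows "MCR_exists n p q"
proof -
  from assms(3) obtain c where
    V: "bij_betw (\<lambda>(b, r). V b r) ({..<p * q} \<times> {..<n}) {1..p * q * n}" and
    sums: "\<forall>b<p * q. (\<Sum>r<n. V b r) = c"
    unfolding row_magic_def by blast
  define M where "M i j = V (i div n * q + j) (i mod n)" for i j
  have "bij_betw (\<lambda>(i, j). M i j) ({..<n * p} \<times> {..<q}) {1..n * p * q}"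
    using bij_betw_trans[OF bij_betw_block_index[OF assms(1,2)] V]
    by (simp add: M_def comp_def case_prod_unfold mult.commute mult.left_commute)
  moreover have "(\<Sum>i\<in>{k * n..<k * n + n}. M i j) = c" if "k < p" "j < q" for k j
  proof -
    have "(\<Sum>i\<in>{k * n..<k * n + n}. M i j) = (\<Sum>r<n. M (r + k * n) j)"
      using sum.shift_bounds_nat_ivl[of "\<lambda>i. M i j" 0 "k * n" n]
      by (simp add: lessThan_atLeast0 add.commute)
    also have "\<dots> = (\<Sum>r<n. V (k * q + j) r)"
      unfolding M_def using assms(1) by (intro sum.cong) auto
    also have "\<dots> = c"
      using sums mult_add_less_mult[OF that] by simp
    finally show ?thesis .
  qed
  ultimately show ?thesis
    unfolding MCR_exists_def is_MCR_def by blast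
qed

lemma is_MCR_block_sum:
  assumes "is_MCR n p q M" and "k < p" and "j < q"
  shows "2 * (\<Sum>i\<in>{k * n..<k * n + n}. M i j) = n * (n * p * q + 1)"
proof -
  from assms(1) obtain c where
    M: "bij_betw (\<lambda>(i, j). M i j) ({..<n * p} \<times> {..<q}) {1..n * p * q}" and
    blocks: "\<forall>k<p. \<forall>j<q. (\<Sum>i\<in>{k * n..<k * n + n}. M i j) = c"
    unfolding is_MCR_def by blast
  define N where "N = n * p * q"
  have "p * q * c = (\<Sum>j<q. \<Sum>k<p. \<Sum>i\<in>{k * n..<k * n + n}. M i j)"
    using blocks by simp
  also have "\<dots> = (\<Sum>j<q. \<Sum>i<n * p. M i j)"
    by (simp add: sum.nat_group mult.commute)
  also have "\<dots> = (\<Sum>i<n * p. \<Sum>j<q. M i j)"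
    by (rule sum.swap)
  also have "\<dots> = (\<Sum>(i, j)\<in>{..<n * p} \<times> {..<q}. M i j)"
    by (simp add: sum.cartesian_product)
  also have "\<dots> = (\<Sum>x\<in>{1..N}. x)"
    unfolding N_def by (rule sum.reindex_bij_betw[OF M])
  finally have "p * q * (2 * c) = N * (N + 1)"
    using double_gauss_sum_from_Suc_0[of N, where ?'a = nat] by simp
  also have "\<dots> = p * q * (n * (N + 1))"
    unfolding N_def by (simp add: algebra_simps)
  finally have "2 * c = n * (N + 1)"
    using assms(2,3) by (simp only: mult_cancel_left) simp
  with blocks assms(2,3) show ?thesis
    unfolding N_def by simp
qed

theorem theorem9:
  fixes n p q :: nat
  assumes "n > 1" and "p > 1" and "q \<ge> 1"
  shows "MCR_exists n p q \<longleftrightarrow> (even n \<or> (odd n \<and> odd p \<and> odd q))"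
proof
  assume "MCR_exists n p q"
  then obtain M where M: "is_MCR n p q M"
    unfolding MCR_exists_def ..
  have "2 * (\<Sum>i\<in>{0 * n..<0 * n + n}. M i 0) = n * (n * p * q + 1)"
    using assms by (intro is_MCR_block_sum[OF M]) auto
  then have "even (n * (n * p * q + 1))"
    by (metis dvd_triv_left)
  then have "even n \<or> odd (n * p * q)"
    by simp
  then show "even n \<or> (odd n \<and> odd p \<and> odd q)"
    by auto
next
  assume "even n \<or> (odd n \<and> odd p \<and> odd q)"
  then have "even n \<or> odd (p * q)" by auto
  with assms obtain V where "row_magic (p * q) n V"
    using row_magic_exists[of n "p * q"] by auto
  with assms show "MCR_exists n p q"
    by (intro MCR_exists_if_row_magic) auto
qed

end
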